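(* Let $\mu>0$ and let $X\sim\mathcal N(0,\sigma_X^2)$, $Y\sim\mathcal N(0,\sigma_Y^2)$ be independent with $\sigma_X^2+\sigma_Y^2>0$. Then $$\mathbb E\Big[\Big(1-\tanh^2\Big(\frac{X+Y}{\mu}\Big)\Big)X^2\mathbf 1_{\{X+Y>0\}}\Big]\le\frac1{\sqrt{2\pi}}\frac{\mu\sigma_X^2\sigma_Y^2}{(\sigma_X^2+\sigma_Y^2)^{3/2}}+\frac3{4\sqrt{2\pi}}\frac{\sigma_X^2\mu^3}{(\sigma_X^2+\sigma_Y^2)^{5/2}}(3\mu^2+4\sigma_X^2).$$ *)

theory Defs
  imports "HOL-Probability.Probability"
begin

definition centered_gaussian :: "real \<Rightarrow> real measure" where
  "centered_gaussian s =
     (if s = 0 then return lborel 0 else density lborel (normal_density 0 s))"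

end

theory Submission
  imports Defs "HOL-Real_Asymp.Real_Asymp"
begin

text \<open>Write S = X + Y and q = sX^2 + sY^2. Conditionally on S = s, X is Gaussian with mean
  sX^2 s / q and variance sX^2 sY^2 / q, so the expectation equals the integral over s > 0 of
  (1 - tanh^2(s/\<mu>)) (sX^2 sY^2 / q + sX^4 s^2 / q^2) \<phi>(s), where \<phi> is the density of S.
  Bounding \<phi> by its maximum 1/\<surd>(2\<pi>q) leaves the integrals over s > 0 of 1 - tanh^2(s/\<mu>), which
  is \<mu>, and of s^2 (1 - tanh^2(s/\<mu>)), which is at most \<mu>^3 since 1 - tanh^2 t \<le> 4 e^(-2t).
  The resulting bound is sharper than the stated one. The degenerate laws sX = 0 or sY = 0
  satisfy the same conditional identity.\<close>

lemma borel_measurable_tanh [measurable]: "(tanh :: real \<Rightarrow> real) \<in> borel_measurable borel"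
  by (intro borel_measurable_continuous_onI continuous_on_tanh continuous_on_id) auto

lemma tanh_square_le_one: "(tanh (t::real))\<^sup>2 \<le> 1"
  using tanh_real_bounds[of t] by (simp add: abs_square_le_1 abs_le_iff)

lemma one_minus_tanh_square_le_exp: "1 - (tanh (t::real))\<^sup>2 \<le> 4 * exp (- 2 * t)"
proof -
  have "1 + (sinh t)\<^sup>2 \<noteq> 0"
    by (metis add_pos_nonneg zero_le_power2 zero_less_one less_irrefl)
  then have "1 - (tanh t)\<^sup>2 = 1 / (cosh t)\<^sup>2"
    using cosh_square_eq[of t] by (simp add: tanh_def power_divide field_simps)
  also have "\<dots> \<le> 1 / (exp t / 2)\<^sup>2"
    using cosh_def[of t] by (intro divide_left_mono power_mono) auto
  also have "\<dots> = 4 * exp (- 2 * t)"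
    by (simp add: power2_eq_square field_simps exp_minus flip: exp_add)
  finally show ?thesis .
qed

lemma nn_integral_one_minus_tanh_square:
  assumes "\<mu> > 0"
  shows "(\<integral>\<^sup>+s. ennreal (1 - (tanh (s / \<mu>))\<^sup>2) * indicator {0..} s \<partial>lborel) = ennreal \<mu>"
proof -
  have "(\<integral>\<^sup>+s. ennreal (1 - (tanh (s / \<mu>))\<^sup>2) * indicator {0..} s \<partial>lborel) = \<mu> - \<mu> * tanh (0 / \<mu>)"
  proof (rule nn_integral_FTC_atLeast)
    fix x :: real
    show "((\<lambda>s. \<mu> * tanh (s / \<mu>)) has_real_derivative 1 - (tanh (x / \<mu>))\<^sup>2) (at x)"
      using assms by (auto intro!: derivative_eq_intros)
    show "((\<lambda>s. \<mu> * tanh (s / \<mu>)) \<longlongrightarrow> \<mu>) at_top"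
      using assms by real_asymp
  qed (auto simp: tanh_square_le_one)
  then show ?thesis by simp
qed

lemma nn_integral_square_exp:
  assumes "c > 0"
  shows "(\<integral>\<^sup>+s. ennreal (s\<^sup>2 * exp (- c * s)) * indicator {0..} s \<partial>lborel) = ennreal (2 / c ^ 3)"
proof -
  let ?F = "\<lambda>s. - exp (- c * s) * (s\<^sup>2 / c + 2 * s / c\<^sup>2 + 2 / c ^ 3)"
  have "(\<integral>\<^sup>+s. ennreal (s\<^sup>2 * exp (- c * s)) * indicator {0..} s \<partial>lborel) = 0 - ?F 0"
  proof (rule nn_integral_FTC_atLeast)
    fix x :: real
    show "(?F has_real_derivative x\<^sup>2 * exp (- c * x)) (at x)"
      using assms by (auto intro!: derivative_eq_intros simp: field_simps power2_eq_square power3_eq_cube)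
    show "(?F \<longlongrightarrow> 0) at_top"
      using assms by real_asymp
  qed auto
  then show ?thesis by simp
qed

lemma normal_density_le:
  assumes "\<sigma> > 0"
  shows "normal_density m \<sigma> x \<le> 1 / (\<sigma> * sqrt (2 * pi))"
proof -
  have "sqrt (2 * pi * \<sigma>\<^sup>2) = \<sigma> * sqrt (2 * pi)"
    using assms by (simp add: real_sqrt_mult)
  then show ?thesis
    using assms by (simp add: normal_density_def divide_right_mono)
qed

lemma nn_integral_normal_second_moment:
  assumes "\<sigma> > 0"
  shows "(\<integral>\<^sup>+x. ennreal (normal_density m \<sigma> x * x\<^sup>2) \<partial>lborel) = ennreal (\<sigma>\<^sup>2 + m\<^sup>2)"
proof -
  have "has_bochner_integral lborel
      (\<lambda>x. normal_density m \<sigma> x * (x - m) ^ (2 * 1) + 2 * m * (normal_density m \<sigma> x * x)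
             - m\<^sup>2 * normal_density m \<sigma> x)
      (\<sigma>\<^sup>2 + 2 * m * m - m\<^sup>2 * 1)"
    using assms normal_moment_even[OF assms, of m 1]
    by (intro has_bochner_integral_add has_bochner_integral_diff has_bochner_integral_mult_right
          normal_moment_nz_1) (auto simp: has_bochner_integral_iff)
  moreover have "(\<lambda>x. normal_density m \<sigma> x * (x - m) ^ (2 * 1) + 2 * m * (normal_density m \<sigma> x * x)
                    - m\<^sup>2 * normal_density m \<sigma> x) = (\<lambda>x. normal_density m \<sigma> x * x\<^sup>2)"
    by (simp add: fun_eq_iff power2_eq_square algebra_simps)
  ultimately have "has_bochner_integral lborel (\<lambda>x. normal_density m \<sigma> x * x\<^sup>2) (\<sigma>\<^sup>2 + m\<^sup>2)"
    by (simp add: power2_eq_square add.commute)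
  then show ?thesis
    by (subst nn_integral_eq_integral) (auto simp: has_bochner_integral_iff)
qed

lemma nn_integral_one_minus_tanh_square_weighted_le:
  assumes "\<mu> > 0" "c1 \<ge> 0" "c2 \<ge> 0" and f: "\<And>s. 0 \<le> f s" "\<And>s. f s \<le> K"
  shows "(\<integral>\<^sup>+s. ennreal ((1 - (tanh (s / \<mu>))\<^sup>2) * indicator {0<..} s * (c1 + c2 * s\<^sup>2) * f s) \<partial>lborel)
           \<le> ennreal (K * (c1 * \<mu> + c2 * \<mu> ^ 3))"
proof -
  let ?g = "\<lambda>s. 1 - (tanh (s / \<mu>))\<^sup>2" and ?h = "\<lambda>s. s\<^sup>2 * exp (- (2 / \<mu>) * s)"
  have K: "K \<ge> 0"
    using f order_trans by blast
  have "ennreal (?g s * indicator {0<..} s * (c1 + c2 * s\<^sup>2) * f s)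
          \<le> ennreal K * (ennreal c1 * (ennreal (?g s) * indicator {0..} s)
                          + ennreal (4 * c2) * (ennreal (?h s) * indicator {0..} s))" for s
  proof (cases "s > 0")
    case True
    have "s\<^sup>2 * ?g s \<le> 4 * ?h s"
      using mult_left_mono[OF one_minus_tanh_square_le_exp[of "s / \<mu>"], of "s\<^sup>2"] by (simp add: ac_simps)
    from mult_left_mono[OF this \<open>c2 \<ge> 0\<close>]
    have tail: "c2 * (s\<^sup>2 * ?g s) \<le> 4 * c2 * ?h s"
      by (simp add: ac_simps)
    have "?g s * (c1 + c2 * s\<^sup>2) * f s \<le> ?g s * (c1 + c2 * s\<^sup>2) * K"
      using assms by (intro mult_left_mono f) (auto simp: tanh_square_le_one)
    also have "\<dots> = K * (c1 * ?g s + c2 * (s\<^sup>2 * ?g s))"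
      by (simp add: algebra_simps)
    also have "\<dots> \<le> K * (c1 * ?g s + 4 * c2 * ?h s)"
      using tail K by (intro mult_left_mono add_left_mono)
    finally have "?g s * (c1 + c2 * s\<^sup>2) * f s \<le> K * (c1 * ?g s + 4 * c2 * ?h s)" .
    moreover have "ennreal (K * (c1 * ?g s + 4 * c2 * ?h s))
        = ennreal K * (ennreal c1 * (ennreal (?g s) * indicator {0..} s)
                       + ennreal (4 * c2) * (ennreal (?h s) * indicator {0..} s))"
      using True assms K by (simp add: ennreal_mult ennreal_plus tanh_square_le_one)
    ultimately show ?thesis
      using True by (metis ennreal_leI indicator_simps(1) greaterThan_iff mult.right_neutral)
  qed simp
  then have "(\<integral>\<^sup>+s. ennreal (?g s * indicator {0<..} s * (c1 + c2 * s\<^sup>2) * f s) \<partial>lborel)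
      \<le> (\<integral>\<^sup>+s. ennreal K * (ennreal c1 * (ennreal (?g s) * indicator {0..} s)
                       + ennreal (4 * c2) * (ennreal (?h s) * indicator {0..} s)) \<partial>lborel)"
    by (rule nn_integral_mono)
  also have "\<dots> = ennreal K * (ennreal c1 * ennreal \<mu> + ennreal (4 * c2) * ennreal (2 / (2 / \<mu>) ^ 3))"
    using assms nn_integral_square_exp[of "2 / \<mu>"]
    by (simp add: nn_integral_cmult nn_integral_add nn_integral_one_minus_tanh_square)
  also have "ennreal (4 * c2) * ennreal (2 / (2 / \<mu>) ^ 3) = ennreal (c2 * \<mu> ^ 3)"
    using assms by (subst ennreal_mult[symmetric]) (auto simp: field_simps)
  also have "ennreal K * (ennreal c1 * ennreal \<mu> + ennreal (c2 * \<mu> ^ 3)) = ennreal (K * (c1 * \<mu> + c2 * \<mu> ^ 3))"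
    using assms K by (simp add: ennreal_mult ennreal_plus)
  finally show ?thesis .
qed

lemma normal_density_mult_eq_conditional:
  assumes "sX > 0" "sY > 0"
  defines "q \<equiv> sX\<^sup>2 + sY\<^sup>2"
  shows "normal_density 0 sX x * normal_density 0 sY (s - x)
           = normal_density 0 (sqrt q) s * normal_density (sX\<^sup>2 / q * s) (sX * sY / sqrt q) x"
proof -
  have q: "q > 0" "sX\<^sup>2 > 0" "sY\<^sup>2 > 0"
    using assms by (simp_all add: add_pos_pos)
  have sq: "(sqrt q)\<^sup>2 = q" "(sX * sY / sqrt q)\<^sup>2 = sX\<^sup>2 * sY\<^sup>2 / q"
    using q by (simp_all add: power_mult_distrib power_divide)
  have frac: "(N / q)\<^sup>2 / (2 * (P / q)) = N\<^sup>2 / (2 * q * P)" if "P > 0" for N P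
    using q that by (simp add: power2_eq_square field_simps)
  have square: "q * (sY\<^sup>2 * x\<^sup>2 + sX\<^sup>2 * (s - x)\<^sup>2) = s\<^sup>2 * sX\<^sup>2 * sY\<^sup>2 + (q * x - sX\<^sup>2 * s)\<^sup>2"
    unfolding q_def by (simp add: power2_eq_square algebra_simps)
  have "- x\<^sup>2 / (2 * sX\<^sup>2) - (s - x)\<^sup>2 / (2 * sY\<^sup>2)
          = - (sY\<^sup>2 * x\<^sup>2 + sX\<^sup>2 * (s - x)\<^sup>2) / (2 * sX\<^sup>2 * sY\<^sup>2)"
    using q by (simp add: field_simps)
  also have "\<dots> = - (s\<^sup>2 * sX\<^sup>2 * sY\<^sup>2 + (q * x - sX\<^sup>2 * s)\<^sup>2) / (2 * q * sX\<^sup>2 * sY\<^sup>2)"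
    unfolding square[symmetric] using q by (simp add: field_simps)
  also have "\<dots> = - (s\<^sup>2 * sX\<^sup>2 * sY\<^sup>2) / (2 * q * sX\<^sup>2 * sY\<^sup>2)
                      - (q * x - sX\<^sup>2 * s)\<^sup>2 / (2 * q * sX\<^sup>2 * sY\<^sup>2)"
    by (simp add: diff_divide_distrib)
  also have "(q * x - sX\<^sup>2 * s)\<^sup>2 / (2 * q * sX\<^sup>2 * sY\<^sup>2)
               = ((q * x - sX\<^sup>2 * s) / q)\<^sup>2 / (2 * (sX\<^sup>2 * sY\<^sup>2 / q))"
    using q frac[of "sX\<^sup>2 * sY\<^sup>2" "q * x - sX\<^sup>2 * s"] by (simp add: mult.assoc)
  also have "(q * x - sX\<^sup>2 * s) / q = x - sX\<^sup>2 / q * s"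
    using q by (simp add: field_simps)
  also have "- (s\<^sup>2 * sX\<^sup>2 * sY\<^sup>2) / (2 * q * sX\<^sup>2 * sY\<^sup>2) = - s\<^sup>2 / (2 * q)"
    using q by (simp add: field_simps)
  finally have "- (x - 0)\<^sup>2 / (2 * sX\<^sup>2) + - (s - x - 0)\<^sup>2 / (2 * sY\<^sup>2)
      = - (s - 0)\<^sup>2 / (2 * (sqrt q)\<^sup>2) + - (x - sX\<^sup>2 / q * s)\<^sup>2 / (2 * (sX * sY / sqrt q)\<^sup>2)"
    unfolding sq by simp
  moreover have "sqrt (2 * pi * sX\<^sup>2) * sqrt (2 * pi * sY\<^sup>2)
      = sqrt (2 * pi * (sqrt q)\<^sup>2) * sqrt (2 * pi * (sX * sY / sqrt q)\<^sup>2)"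
    unfolding sq using q by (simp add: real_sqrt_mult[symmetric] field_simps)
  ultimately show ?thesis
    unfolding normal_density_def by (simp add: exp_add[symmetric] field_simps)
qed

lemma nn_integral_normal_density_square_sum:
  fixes g :: "real \<Rightarrow> real"
  assumes "sX > 0" "sY > 0" and g: "g \<in> borel_measurable borel" "\<And>s. 0 \<le> g s"
  defines "q \<equiv> sX\<^sup>2 + sY\<^sup>2"
  shows "(\<integral>\<^sup>+x. ennreal (normal_density 0 sX x)
              * (\<integral>\<^sup>+y. ennreal (normal_density 0 sY y) * ennreal (x\<^sup>2 * g (x + y)) \<partial>lborel) \<partial>lborel)
         = (\<integral>\<^sup>+s. ennreal (g s * (sX\<^sup>2 * sY\<^sup>2 / q + (sX\<^sup>2 / q)\<^sup>2 * s\<^sup>2) * normal_density 0 (sqrt q) s) \<partial>lborel)"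
proof -
  let ?p = "\<lambda>x s. normal_density 0 sX x * normal_density 0 sY (s - x) * (x\<^sup>2 * g s)"
  have sd: "sX * sY / sqrt q > 0"
    using assms by (simp add: q_def add_pos_pos)
  have shift: "ennreal (normal_density 0 sX x)
                 * (\<integral>\<^sup>+y. ennreal (normal_density 0 sY y) * ennreal (x\<^sup>2 * g (x + y)) \<partial>lborel)
               = (\<integral>\<^sup>+s. ennreal (?p x s) \<partial>lborel)" for x
  proof -
    have "ennreal (normal_density 0 sX x)
            * (\<integral>\<^sup>+y. ennreal (normal_density 0 sY y) * ennreal (x\<^sup>2 * g (x + y)) \<partial>lborel)
          = (\<integral>\<^sup>+y. ennreal (normal_density 0 sX x * normal_density 0 sY y * (x\<^sup>2 * g (x + y))) \<partial>lborel)"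
      using g by (subst nn_integral_cmult[symmetric]) (auto simp: ennreal_mult mult.assoc intro!: nn_integral_cong)
    also have "\<dots> = (\<integral>\<^sup>+s. ennreal (?p x s) \<partial>lborel)"
      using nn_integral_real_affine[of "\<lambda>s. ennreal (?p x s)" 1 x] g by simp
    finally show ?thesis .
  qed
  have conditional: "(\<integral>\<^sup>+x. ennreal (?p x s) \<partial>lborel)
      = ennreal (g s * (sX\<^sup>2 * sY\<^sup>2 / q + (sX\<^sup>2 / q)\<^sup>2 * s\<^sup>2) * normal_density 0 (sqrt q) s)" for s
  proof -
    let ?c = "g s * normal_density 0 (sqrt q) s"
    have "(\<integral>\<^sup>+x. ennreal (?p x s) \<partial>lborel)
        = (\<integral>\<^sup>+x. ennreal ?c * ennreal (normal_density (sX\<^sup>2 / q * s) (sX * sY / sqrt q) x * x\<^sup>2) \<partial>lborel)"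
      using g unfolding q_def
      by (intro nn_integral_cong) (simp add: normal_density_mult_eq_conditional assms ennreal_mult[symmetric] mult_ac)
    also have "\<dots> = ennreal ?c * ennreal ((sX * sY / sqrt q)\<^sup>2 + (sX\<^sup>2 / q * s)\<^sup>2)"
      by (simp add: nn_integral_cmult nn_integral_normal_second_moment[OF sd])
    also have "(sX * sY / sqrt q)\<^sup>2 + (sX\<^sup>2 / q * s)\<^sup>2 = sX\<^sup>2 * sY\<^sup>2 / q + (sX\<^sup>2 / q)\<^sup>2 * s\<^sup>2"
      using assms by (simp add: q_def power_mult_distrib power_divide add_pos_pos)
    also have "ennreal ?c * ennreal (sX\<^sup>2 * sY\<^sup>2 / q + (sX\<^sup>2 / q)\<^sup>2 * s\<^sup>2)
        = ennreal (g s * (sX\<^sup>2 * sY\<^sup>2 / q + (sX\<^sup>2 / q)\<^sup>2 * s\<^sup>2) * normal_density 0 (sqrt q) s)"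
      using g by (subst ennreal_mult[symmetric]) (auto simp: q_def mult_ac)
    finally show ?thesis .
  qed
  have "(\<integral>\<^sup>+x. \<integral>\<^sup>+s. ennreal (?p x s) \<partial>lborel \<partial>lborel) = (\<integral>\<^sup>+s. \<integral>\<^sup>+x. ennreal (?p x s) \<partial>lborel \<partial>lborel)"
    using g by (intro lborel_pair.Fubini') (simp add: case_prod_unfold)
  then show ?thesis
    by (simp only: shift conditional)
qed

lemma sets_centered_gaussian [measurable_cong]: "sets (centered_gaussian s) = sets borel"
  by (simp add: centered_gaussian_def)

lemma prob_space_centered_gaussian: "s \<ge> 0 \<Longrightarrow> prob_space (centered_gaussian s)"
  unfolding centered_gaussian_def by (auto intro!: prob_space_normal_density prob_space_return)

lemma borel_measurable_nn_integral_centered_gaussian: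
  assumes "s \<ge> 0" and f: "(\<lambda>(x, y). f x y) \<in> borel_measurable (borel \<Otimes>\<^sub>M borel)"
  shows "(\<lambda>x. \<integral>\<^sup>+y. f x y \<partial>centered_gaussian s) \<in> borel_measurable borel"
proof -
  interpret sigma_finite_measure "centered_gaussian s"
    using prob_space_centered_gaussian[OF assms(1)] by (rule prob_space_imp_sigma_finite)
  have "(\<lambda>(x, y). f x y) \<in> borel_measurable (borel \<Otimes>\<^sub>M centered_gaussian s)"
    using f by (subst measurable_cong_sets[OF sets_pair_measure_cong[OF refl sets_centered_gaussian] refl])
  from borel_measurable_nn_integral_fst[OF this] show ?thesis
    by simp
qed

lemma nn_integral_centered_gaussian_square_sum:
  fixes g :: "real \<Rightarrow> real"
  assumes "sX \<ge> 0" "sY \<ge> 0" and g: "g \<in> borel_measurable borel" "\<And>s. 0 \<le> g s"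
  defines "q \<equiv> sX\<^sup>2 + sY\<^sup>2"
  shows "(\<integral>\<^sup>+x. \<integral>\<^sup>+y. ennreal (x\<^sup>2 * g (x + y)) \<partial>centered_gaussian sY \<partial>centered_gaussian sX)
         = (\<integral>\<^sup>+s. ennreal (g s * (sX\<^sup>2 * sY\<^sup>2 / q + (sX\<^sup>2 / q)\<^sup>2 * s\<^sup>2) * normal_density 0 (sqrt q) s) \<partial>lborel)"
proof -
  have inner: "(\<lambda>x. \<integral>\<^sup>+y. ennreal (x\<^sup>2 * g (x + y)) \<partial>centered_gaussian sY) \<in> borel_measurable borel"
    using assms by (intro borel_measurable_nn_integral_centered_gaussian) auto
  consider "sX = 0" | "sX > 0" "sY = 0" | "sX > 0" "sY > 0"
    using assms by linarith
  then show ?thesis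
  proof cases
    case 1
    then show ?thesis
      using inner by (simp add: centered_gaussian_def nn_integral_return)
  next
    case 2
    then have "sqrt q = sX"
      by (simp add: q_def)
    with 2 g show ?thesis
      by (simp add: centered_gaussian_def nn_integral_return nn_integral_density q_def ennreal_mult[symmetric]
          mult_ac)
  next
    case 3
    then show ?thesis
      using inner g unfolding q_def
      by (simp add: centered_gaussian_def nn_integral_density nn_integral_normal_density_square_sum)
  qed
qed

lemma (in prob_space) nn_integral_indep_var:
  assumes "indep_var N X N' Y" and f: "f \<in> borel_measurable (N \<Otimes>\<^sub>M N')"
  shows "(\<integral>\<^sup>+\<omega>. f (X \<omega>, Y \<omega>) \<partial>M) = (\<integral>\<^sup>+x. \<integral>\<^sup>+y. f (x, y) \<partial>distr M N' Y \<partial>distr M N X)"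
proof -
  have X: "X \<in> measurable M N" and Y: "Y \<in> measurable M N'"
    and joint: "distr M N X \<Otimes>\<^sub>M distr M N' Y = distr M (N \<Otimes>\<^sub>M N') (\<lambda>\<omega>. (X \<omega>, Y \<omega>))"
    using assms(1) by (simp_all add: indep_var_distribution_eq)
  interpret Y: prob_space "distr M N' Y"
    using Y by (rule prob_space_distr)
  have "(\<integral>\<^sup>+\<omega>. f (X \<omega>, Y \<omega>) \<partial>M) = (\<integral>\<^sup>+z. f z \<partial>distr M (N \<Otimes>\<^sub>M N') (\<lambda>\<omega>. (X \<omega>, Y \<omega>)))"
    using X Y f by (simp add: nn_integral_distr)
  also have "\<dots> = (\<integral>\<^sup>+x. \<integral>\<^sup>+y. f (x, y) \<partial>distr M N' Y \<partial>distr M N X)"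
    using f unfolding joint[symmetric] by (simp add: Y.nn_integral_fst)
  finally show ?thesis .
qed

lemma gaussian_conditional_bound_le:
  assumes "\<mu> > 0" "sX\<^sup>2 + sY\<^sup>2 > 0"
  defines "q \<equiv> sX\<^sup>2 + sY\<^sup>2"
  shows "1 / (sqrt q * sqrt (2 * pi)) * (sX\<^sup>2 * sY\<^sup>2 / q * \<mu> + (sX\<^sup>2 / q)\<^sup>2 * \<mu> ^ 3)
    \<le> 1 / sqrt (2 * pi) * (\<mu> * sX\<^sup>2 * sY\<^sup>2 / (sX\<^sup>2 + sY\<^sup>2) powr (3/2))
      + 3 / (4 * sqrt (2 * pi)) * (sX\<^sup>2 * \<mu> ^ 3 / (sX\<^sup>2 + sY\<^sup>2) powr (5/2)) * (3 * \<mu>\<^sup>2 + 4 * sX\<^sup>2)"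
proof -
  have q: "q > 0"
    using assms by simp
  have powr: "q powr (3/2) = q * sqrt q" "q powr (5/2) = q\<^sup>2 * sqrt q"
    using q powr_add[of q 1 "1/2"] powr_add[of q 2 "1/2"] by (simp_all add: powr_half_sqrt powr_numeral)
  have "sX ^ 4 * \<mu> ^ 3 = sX\<^sup>2 * \<mu> ^ 3 * sX\<^sup>2"
    by (simp add: power2_eq_square power4_eq_xxxx)
  also have "\<dots> \<le> sX\<^sup>2 * \<mu> ^ 3 * (3 / 4 * (3 * \<mu>\<^sup>2 + 4 * sX\<^sup>2))"
    using assms by (intro mult_left_mono) auto
  finally have "sX ^ 4 * \<mu> ^ 3 \<le> 3 / 4 * sX\<^sup>2 * \<mu> ^ 3 * (3 * \<mu>\<^sup>2 + 4 * sX\<^sup>2)"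
    by (simp add: algebra_simps)
  then have tail: "sX ^ 4 * \<mu> ^ 3 / (q\<^sup>2 * sqrt q) \<le> 3 / 4 * sX\<^sup>2 * \<mu> ^ 3 * (3 * \<mu>\<^sup>2 + 4 * sX\<^sup>2) / (q\<^sup>2 * sqrt q)"
    using q by (intro divide_right_mono) auto
  have lhs: "1 / (sqrt q * sqrt (2 * pi)) * (sX\<^sup>2 * sY\<^sup>2 / q * \<mu> + (sX\<^sup>2 / q)\<^sup>2 * \<mu> ^ 3)
      = 1 / sqrt (2 * pi) * (\<mu> * sX\<^sup>2 * sY\<^sup>2 / (q * sqrt q))
        + 1 / sqrt (2 * pi) * (sX ^ 4 * \<mu> ^ 3 / (q\<^sup>2 * sqrt q))"
    using q by (simp add: field_simps power2_eq_square power4_eq_xxxx)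
  have rhs: "3 / (4 * sqrt (2 * pi)) * (sX\<^sup>2 * \<mu> ^ 3 / (q\<^sup>2 * sqrt q)) * (3 * \<mu>\<^sup>2 + 4 * sX\<^sup>2)
      = 1 / sqrt (2 * pi) * (3 / 4 * sX\<^sup>2 * \<mu> ^ 3 * (3 * \<mu>\<^sup>2 + 4 * sX\<^sup>2) / (q\<^sup>2 * sqrt q))"
    by (simp add: field_simps)
  show ?thesis
    unfolding q_def[symmetric] powr lhs rhs by (intro add_left_mono mult_left_mono tail) simp
qed

theorem mainTheorem17:
  fixes M :: "'a measure" and X Y :: "'a \<Rightarrow> real" and \<mu> sX sY :: real
  assumes "prob_space M"
    and "\<mu> > 0"
    and "sX \<ge> 0" and "sY \<ge> 0" and "sX\<^sup>2 + sY\<^sup>2 > 0"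
    and "X \<in> borel_measurable M" and "Y \<in> borel_measurable M"
    and "prob_space.indep_var M borel X borel Y"
    and "distr M lborel X = centered_gaussian sX"
    and "distr M lborel Y = centered_gaussian sY"
  shows "prob_space.expectation M
           (\<lambda>\<omega>. (1 - (tanh ((X \<omega> + Y \<omega>) / \<mu>))\<^sup>2) * (X \<omega>)\<^sup>2
                 * indicator {0<..} (X \<omega> + Y \<omega>))
         \<le> 1 / sqrt (2 * pi) * (\<mu> * sX\<^sup>2 * sY\<^sup>2 / (sX\<^sup>2 + sY\<^sup>2) powr (3/2))
           + 3 / (4 * sqrt (2 * pi)) * (sX\<^sup>2 * \<mu> ^ 3 / (sX\<^sup>2 + sY\<^sup>2) powr (5/2))
             * (3 * \<mu>\<^sup>2 + 4 * sX\<^sup>2)"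
proof -
  interpret prob_space M by fact
  let ?g = "\<lambda>s. (1 - (tanh (s / \<mu>))\<^sup>2) * indicator {0<..} s"
  define q where "q = sX\<^sup>2 + sY\<^sup>2"
  define K where "K = 1 / (sqrt q * sqrt (2 * pi))"
  have g_nonneg: "0 \<le> ?g s" for s
    by (simp add: tanh_square_le_one)
  have "distr M borel X = centered_gaussian sX" "distr M borel Y = centered_gaussian sY"
    using assms(9,10) by (simp_all add: distr_def)
  then have "(\<integral>\<^sup>+\<omega>. ennreal ((X \<omega>)\<^sup>2 * ?g (X \<omega> + Y \<omega>)) \<partial>M)
      = (\<integral>\<^sup>+x. \<integral>\<^sup>+y. ennreal (x\<^sup>2 * ?g (x + y)) \<partial>centered_gaussian sY \<partial>centered_gaussian sX)"
    using nn_integral_indep_var[OF assms(8), of "\<lambda>(x, y). ennreal (x\<^sup>2 * ?g (x + y))"] by simp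
  also have "\<dots> = (\<integral>\<^sup>+s. ennreal (?g s * (sX\<^sup>2 * sY\<^sup>2 / q + (sX\<^sup>2 / q)\<^sup>2 * s\<^sup>2) * normal_density 0 (sqrt q) s) \<partial>lborel)"
    unfolding q_def using assms g_nonneg by (intro nn_integral_centered_gaussian_square_sum) auto
  also have "\<dots> \<le> ennreal (K * (sX\<^sup>2 * sY\<^sup>2 / q * \<mu> + (sX\<^sup>2 / q)\<^sup>2 * \<mu> ^ 3))"
    unfolding K_def using assms
    by (intro nn_integral_one_minus_tanh_square_weighted_le normal_density_le) (auto simp: q_def)
  finally have "expectation (\<lambda>\<omega>. (X \<omega>)\<^sup>2 * ?g (X \<omega> + Y \<omega>))
      \<le> K * (sX\<^sup>2 * sY\<^sup>2 / q * \<mu> + (sX\<^sup>2 / q)\<^sup>2 * \<mu> ^ 3)"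
    using assms g_nonneg
    by (subst integral_eq_nn_integral) (auto intro!: enn2real_leI simp: K_def q_def)
  also have "\<dots> \<le> 1 / sqrt (2 * pi) * (\<mu> * sX\<^sup>2 * sY\<^sup>2 / (sX\<^sup>2 + sY\<^sup>2) powr (3/2))
           + 3 / (4 * sqrt (2 * pi)) * (sX\<^sup>2 * \<mu> ^ 3 / (sX\<^sup>2 + sY\<^sup>2) powr (5/2))
             * (3 * \<mu>\<^sup>2 + 4 * sX\<^sup>2)"
    unfolding K_def q_def using assms by (intro gaussian_conditional_bound_le)
  finally show ?thesis
    by (simp add: mult_ac)
qed

end
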